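(* In every deterministic MDP (as in the context), the algorithm R-max returns an optimal policy. Consequently its sample complexity is at most $SAT$.
   Context: Deterministic finite-horizon MDP $\mathcal M=(\mathcal S,\mathcal A,T,s_1,f,R)$: finite state set with $S=|\mathcal S|$, actions with $A=|\mathcal A|$, start state $s_1$, transitions $s_{t+1}=f(s_t,a_t)$, rewards $R(s_t,a_t)$, steps $t\in[T]$, no discounting; a policy is optimal if it maximizes $J(\pi)=\mathbb E_\pi[\sum_{t=1}^TR(s_t,a_t)]$; each episode counts $T$ timesteps, and sample complexity is the least number of timesteps after which the output policy is optimal with probability at least $1/2$. Let $R_{\max}=\max_{(s,a)}R(s,a)$. R-max knows $\mathcal S,\mathcal A,T$ and $R_{\max}$ and has a deterministic oracle that maps any model $(\hat f,\hat R)$ (with $\hat f:\mathcal S\times\mathcal A\to\mathcal S$, $\hat R:\mathcal S\times\mathcal A\to\mathbb R$) to a deterministic time-dependent policy that is optimal for the MDP $(\mathcal S,\mathcal A,T,s_1,\hat f,\hat R)$. R-max: initialize $\hat f(s,a)=s$ and $\hat R(s,a)=R_{\max}$ for all $(s,a)$; run $SA$ episodes; at each step $t$ of each episode, in the current state $s$, take the action prescribed at $(t,s)$ by the oracle's policy for the current model $(\hat f,\hat R)$, observe the reward $r$ and next state $s'$, and set $\hat R(s,a)\gets r$, $\hat f(s,a)\gets s'$; finally return the oracle's policy for the final $(\hat f,\hat R)$. *)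

theory Defs
  imports Complex_Main
begin

text \<open>A (deterministic, time-dependent) policy is a map nat => 's => 'a, used at steps t = 1..T.\<close>

type_synonym ('s, 'a) policy = "nat \<Rightarrow> 's \<Rightarrow> 'a"

fun state_at :: "('s \<Rightarrow> 'a \<Rightarrow> 's) \<Rightarrow> 's \<Rightarrow> ('s, 'a) policy \<Rightarrow> nat \<Rightarrow> 's" where
  "state_at f s1 p 0 = s1"
| "state_at f s1 p (Suc 0) = s1"
| "state_at f s1 p (Suc (Suc t)) =
     (let s = state_at f s1 p (Suc t) in f s (p (Suc t) s))"

text \<open>Return J(p) = sum_{t=1}^T R(s_t, a_t) (deterministic, so the expectation is trivial).\<close>
definition J :: "('s \<Rightarrow> 'a \<Rightarrow> 's) \<Rightarrow> ('s \<Rightarrow> 'a \<Rightarrow> real) \<Rightarrow> 's \<Rightarrow> nat \<Rightarrow> ('s, 'a) policy \<Rightarrow> real" where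
  "J f R s1 T p = (\<Sum>t = 1..T. let s = state_at f s1 p t in R s (p t s))"

definition optimal :: "('s \<Rightarrow> 'a \<Rightarrow> 's) \<Rightarrow> ('s \<Rightarrow> 'a \<Rightarrow> real) \<Rightarrow> 's \<Rightarrow> nat \<Rightarrow> ('s, 'a) policy \<Rightarrow> bool" where
  "optimal f R s1 T p \<longleftrightarrow> (\<forall>q. J f R s1 T q \<le> J f R s1 T p)"

type_synonym ('s, 'a) planner = "('s \<Rightarrow> 'a \<Rightarrow> 's) \<Rightarrow> ('s \<Rightarrow> 'a \<Rightarrow> real) \<Rightarrow> ('s, 'a) policy"

definition planning_ok :: "('s, 'a) planner \<Rightarrow> 's \<Rightarrow> nat \<Rightarrow> bool" where
  "planning_ok P s1 T \<longleftrightarrow> (\<forall>fh Rh. optimal fh Rh s1 T (P fh Rh))"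

definition Rmax_val :: "('s::finite \<Rightarrow> 'a::finite \<Rightarrow> real) \<Rightarrow> real" where
  "Rmax_val R = Max {R s a | s a. True}"

definition rmax_step :: "('s, 'a) planner \<Rightarrow> ('s \<Rightarrow> 'a \<Rightarrow> 's) \<Rightarrow> ('s \<Rightarrow> 'a \<Rightarrow> real) \<Rightarrow> nat \<Rightarrow>
    ('s \<Rightarrow> 'a \<Rightarrow> 's) \<times> ('s \<Rightarrow> 'a \<Rightarrow> real) \<times> 's \<Rightarrow>
    ('s \<Rightarrow> 'a \<Rightarrow> 's) \<times> ('s \<Rightarrow> 'a \<Rightarrow> real) \<times> 's" where
  "rmax_step P f R t st = (case st of (fh, Rh, s) \<Rightarrow>
     (let a = P fh Rh t s; r = R s a; s' = f s a in
      (fh(s := (fh s)(a := s')), Rh(s := (Rh s)(a := r)), s')))"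

definition rmax_episode :: "('s, 'a) planner \<Rightarrow> ('s \<Rightarrow> 'a \<Rightarrow> 's) \<Rightarrow> ('s \<Rightarrow> 'a \<Rightarrow> real) \<Rightarrow> 's \<Rightarrow> nat \<Rightarrow>
    ('s \<Rightarrow> 'a \<Rightarrow> 's) \<times> ('s \<Rightarrow> 'a \<Rightarrow> real) \<Rightarrow> ('s \<Rightarrow> 'a \<Rightarrow> 's) \<times> ('s \<Rightarrow> 'a \<Rightarrow> real)" where
  "rmax_episode P f R s1 T m =
     (case fold (rmax_step P f R) [1..<Suc T] (fst m, snd m, s1) of (fh, Rh, _) \<Rightarrow> (fh, Rh))"

definition rmax_model :: "('s::finite, 'a::finite) planner \<Rightarrow> ('s \<Rightarrow> 'a \<Rightarrow> 's) \<Rightarrow> ('s \<Rightarrow> 'a \<Rightarrow> real) \<Rightarrow> 's \<Rightarrow> nat \<Rightarrow> nat \<Rightarrow>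
    ('s \<Rightarrow> 'a \<Rightarrow> 's) \<times> ('s \<Rightarrow> 'a \<Rightarrow> real)" where
  "rmax_model P f R s1 T k = (rmax_episode P f R s1 T ^^ k) (\<lambda>s a. s, \<lambda>s a. Rmax_val R)"

text \<open>Output of R-max: run S*A episodes (S*A*T timesteps), return planner policy for final model.\<close>
definition rmax :: "('s::finite, 'a::finite) planner \<Rightarrow> ('s \<Rightarrow> 'a \<Rightarrow> 's) \<Rightarrow> ('s \<Rightarrow> 'a \<Rightarrow> real) \<Rightarrow> 's \<Rightarrow> nat \<Rightarrow> ('s, 'a) policy" where
  "rmax P f R s1 T = (case rmax_model P f R s1 T (card (UNIV :: 's set) * card (UNIV :: 'a set)) of (fh, Rh) \<Rightarrow> P fh Rh)"

end

theory Submission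
  imports Defs
begin

text \<open>R-max maintains an optimistic model: each state-action pair is either known exactly or
  is still a self-loop paying the reward bound \<open>R\<^sub>m\<^sub>a\<^sub>x\<close>. In such a model the optimal value
  dominates the true return of every policy, which may follow that policy up to its first unknown
  pair and then stay in that self-loop. Hence a model-optimal policy whose true trajectory uses
  only known pairs is optimal. Every episode either meets an unknown pair on this trajectory and
  learns it, or leaves the model unchanged with an optimal greedy policy; since there are only
  \<open>S A\<close> pairs, after \<open>S A\<close> episodes the model is stable or exact.\<close>

type_synonym ('s, 'a) model = "('s \<Rightarrow> 'a \<Rightarrow> 's) \<times> ('s \<Rightarrow> 'a \<Rightarrow> real)"

fun unknown_pairs :: "('s \<Rightarrow> 'a \<Rightarrow> 's) \<Rightarrow> ('s \<Rightarrow> 'a \<Rightarrow> real) \<Rightarrow> ('s, 'a) model \<Rightarrow> ('s \<times> 'a) set" where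
  "unknown_pairs f R (fh, Rh) = {(s, a). fh s a \<noteq> f s a \<or> Rh s a \<noteq> R s a}"

fun optimistic_model :: "('s \<Rightarrow> 'a \<Rightarrow> 's) \<Rightarrow> ('s \<Rightarrow> 'a \<Rightarrow> real) \<Rightarrow> real \<Rightarrow> ('s, 'a) model \<Rightarrow> bool" where
  "optimistic_model f R r (fh, Rh) \<longleftrightarrow>
     (\<forall>s a. (fh s a = f s a \<and> Rh s a = R s a) \<or> (fh s a = s \<and> Rh s a = r))"

definition state_action_at :: "('s \<Rightarrow> 'a \<Rightarrow> 's) \<Rightarrow> 's \<Rightarrow> ('s, 'a) policy \<Rightarrow> nat \<Rightarrow> 's \<times> 'a" where
  "state_action_at f s1 p t = (let s = state_at f s1 p t in (s, p t s))"

definition known_trajectory ::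
    "('s \<Rightarrow> 'a \<Rightarrow> 's) \<Rightarrow> ('s \<Rightarrow> 'a \<Rightarrow> real) \<Rightarrow> ('s, 'a) model \<Rightarrow> 's \<Rightarrow> nat \<Rightarrow> ('s, 'a) policy \<Rightarrow> bool" where
  "known_trajectory f R m s1 T p \<longleftrightarrow> (\<forall>t\<in>{1..T}. state_action_at f s1 p t \<notin> unknown_pairs f R m)"

lemma first_hitting_step:
  fixes T :: nat
  obtains \<tau> where "1 \<le> \<tau>" "\<tau> \<le> Suc T" "\<And>t. 1 \<le> t \<Longrightarrow> t < \<tau> \<Longrightarrow> \<not> B t" "\<tau> \<le> T \<Longrightarrow> B \<tau>"
proof -
  define B' where "B' t \<longleftrightarrow> (1 \<le> t \<and> t \<le> T \<and> B t) \<or> t = Suc T" for t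
  have "B' (Suc T)" by (simp add: B'_def)
  from ex_least_nat_le[of B', OF this] obtain \<tau> where "\<tau> \<le> Suc T" "\<forall>i<\<tau>. \<not> B' i" "B' \<tau>"
    by blast
  then show ?thesis
    using that[of \<tau>] by (fastforce simp: B'_def)
qed

lemma funpow_stable_or_measure_decreases:
  fixes g :: "'x \<Rightarrow> 'x" and \<mu> :: "'x \<Rightarrow> nat"
  assumes "I x" and "\<And>y. I y \<Longrightarrow> I (g y)"
    and "\<And>y. I y \<Longrightarrow> (g y = y \<and> G y) \<or> \<mu> (g y) < \<mu> y"
  shows "G ((g ^^ k) x) \<or> \<mu> ((g ^^ k) x) + k \<le> \<mu> x"
proof -
  have invariant: "I ((g ^^ k) x)" for k
    by (induction k) (simp_all add: assms(1,2))
  have "(g ((g ^^ k) x) = (g ^^ k) x \<and> G ((g ^^ k) x)) \<or> \<mu> ((g ^^ k) x) + k \<le> \<mu> x" for k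
  proof (induction k)
    case 0
    show ?case by simp
  next
    case (Suc k)
    with assms(3)[OF invariant[of k]] show ?case
      by auto
  qed
  then show ?thesis by blast
qed

lemma Rmax_val_ge: "R s a \<le> Rmax_val (R :: 's::finite \<Rightarrow> 'a::finite \<Rightarrow> real)"
proof -
  have "{R s a |s a. True} = case_prod R ` UNIV" by auto
  then show ?thesis
    unfolding Rmax_val_def by (metis Max_ge finite_UNIV finite_imageI rangeI case_prod_conv)
qed

lemma unknown_pairs_empty_iff: "unknown_pairs f R m = {} \<longleftrightarrow> m = (f, R)"
  by (cases m) (auto simp: fun_eq_iff)

lemma card_unknown_pairs_le:
  fixes m :: "('s::finite, 'a::finite) model"
  shows "card (unknown_pairs f R m) \<le> card (UNIV :: 's set) * card (UNIV :: 'a set)"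
  by (metis card_cartesian_product card_mono finite_UNIV subset_UNIV UNIV_Times_UNIV)

lemma state_at_eq_if_transitions_agree:
  assumes "\<And>t. 1 \<le> t \<Longrightarrow> t < n \<Longrightarrow>
    g (state_at f s1 p t) (p t (state_at f s1 p t)) = f (state_at f s1 p t) (p t (state_at f s1 p t))"
  shows "state_at g s1 p n = state_at f s1 p n"
  using assms
proof (induction n)
  case (Suc n)
  show ?case
  proof (cases n)
    case (Suc k)
    with Suc.IH Suc.prems have "state_at g s1 p (Suc k) = state_at f s1 p (Suc k)"
      by simp
    with Suc Suc.prems[of "Suc k"] show ?thesis
      by (simp add: Let_def)
  qed simp
qed simp

lemma J_eq_if_known_trajectory:
  assumes "known_trajectory f R (fh, Rh) s1 T p"
  shows "J fh Rh s1 T p = J f R s1 T p"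
proof -
  define st where "st t = state_at f s1 p t" for t
  have known: "fh (st t) (p t (st t)) = f (st t) (p t (st t)) \<and>
      Rh (st t) (p t (st t)) = R (st t) (p t (st t))"
    if "t \<in> {1..T}" for t
    using assms that by (auto simp: known_trajectory_def state_action_at_def st_def Let_def)
  have "state_at fh s1 p t = st t" if "t \<le> T" for t
    unfolding st_def using that known by (intro state_at_eq_if_transitions_agree) (auto simp: st_def)
  with known show ?thesis
    unfolding J_def by (intro sum.cong) (auto simp: st_def Let_def)
qed

lemma J_le_optimistic_model:
  assumes opt: "optimistic_model f R r (fh, Rh)" and bound: "\<And>s a. R s a \<le> r"
  shows "\<exists>q'. J f R s1 T q \<le> J fh Rh s1 T q'"
proof -
  define st where "st t = state_at f s1 q t" for t
  obtain \<tau> where \<tau>: "1 \<le> \<tau>" "\<tau> \<le> Suc T"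
    and before: "\<And>t. 1 \<le> t \<Longrightarrow> t < \<tau> \<Longrightarrow> (st t, q t (st t)) \<notin> unknown_pairs f R (fh, Rh)"
    and at: "\<tau> \<le> T \<Longrightarrow> (st \<tau>, q \<tau> (st \<tau>)) \<in> unknown_pairs f R (fh, Rh)"
    using first_hitting_step[of T "\<lambda>t. (st t, q t (st t)) \<in> unknown_pairs f R (fh, Rh)"] by blast
  have loop: "fh (st \<tau>) (q \<tau> (st \<tau>)) = st \<tau> \<and> Rh (st \<tau>) (q \<tau> (st \<tau>)) = r" if "\<tau> \<le> T"
    using opt at[OF that] by auto
  \<comment> \<open>In the model, repeating the action at step \<open>\<tau>\<close> stays in a self-loop paying \<open>r\<close>.\<close>
  define q' where "q' t = q (min t \<tau>)" for t
  have states: "state_at fh s1 q' (Suc n) = st (min (Suc n) \<tau>)" if "Suc n \<le> Suc T" for n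
    using that
  proof (induction n)
    case 0
    with \<tau> show ?case by (simp add: st_def min_def)
  next
    case (Suc n)
    then have "state_at fh s1 q' (Suc n) = st (min (Suc n) \<tau>)"
      by simp
    then have next_state: "state_at fh s1 q' (Suc (Suc n)) =
        fh (st (min (Suc n) \<tau>)) (q (min (Suc n) \<tau>) (st (min (Suc n) \<tau>)))"
      by (simp add: Let_def, simp add: q'_def)
    show ?case
    proof (cases "Suc n < \<tau>")
      case True
      with before[of "Suc n"] next_state show ?thesis
        by (simp add: min_def st_def Let_def)
    next
      case False
      with Suc.prems loop next_state show ?thesis
        by (simp add: min_def)
    qed
  qed
  have "(let s = st t in R s (q t s)) \<le> (let s = state_at fh s1 q' t in Rh s (q' t s))"
    if t: "t \<in> {1..T}" for t
  proof -
    obtain n where n: "t = Suc n" using t by (cases t) auto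
    show ?thesis
    proof (cases "t < \<tau>")
      case True
      with before[of t] states[of n] t n show ?thesis
        by (simp add: q'_def min_def)
    next
      case False
      with loop bound states[of n] t n show ?thesis
        by (simp add: q'_def min_def Let_def)
    qed
  qed
  then have "J f R s1 T q \<le> J fh Rh s1 T q'"
    unfolding J_def st_def by (rule sum_mono)
  then show ?thesis by blast
qed

lemma optimal_if_known_trajectory:
  assumes "optimistic_model f R r (fh, Rh)" "\<And>s a. R s a \<le> r"
    and "optimal fh Rh s1 T p" and "known_trajectory f R (fh, Rh) s1 T p"
  shows "optimal f R s1 T p"
  unfolding optimal_def
proof
  fix q
  obtain q' where "J f R s1 T q \<le> J fh Rh s1 T q'"
    using J_le_optimistic_model[OF assms(1,2)] by blast
  also have "\<dots> \<le> J fh Rh s1 T p"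
    using assms(3) by (simp add: optimal_def)
  also have "\<dots> = J f R s1 T p"
    using assms(4) by (rule J_eq_if_known_trajectory)
  finally show "J f R s1 T q \<le> J f R s1 T p" .
qed

lemma unknown_pairs_update:
  "unknown_pairs f R (fh(s := (fh s)(a := f s a)), Rh(s := (Rh s)(a := R s a))) =
     unknown_pairs f R (fh, Rh) - {(s, a)}"
  by (simp add: set_eq_iff)

lemma optimistic_model_update:
  "optimistic_model f R r (fh, Rh) \<Longrightarrow>
     optimistic_model f R r (fh(s := (fh s)(a := f s a)), Rh(s := (Rh s)(a := R s a)))"
  by simp

lemma rmax_step_eq:
  "a = P fh Rh t s \<Longrightarrow>
     rmax_step P f R t (fh, Rh, s) = (fh(s := (fh s)(a := f s a)), Rh(s := (Rh s)(a := R s a)), f s a)"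
  by (simp add: rmax_step_def Let_def)

lemma unknown_pairs_fold_rmax_step:
  assumes "fold (rmax_step P f R) ts (fh, Rh, s) = (fh', Rh', s')"
  shows "unknown_pairs f R (fh', Rh') \<subseteq> unknown_pairs f R (fh, Rh)"
  using assms
proof (induction ts arbitrary: fh Rh s)
  case (Cons t ts)
  let ?a = "P fh Rh t s"
  have "fold (rmax_step P f R) ts
      (fh(s := (fh s)(?a := f s ?a)), Rh(s := (Rh s)(?a := R s ?a)), f s ?a) = (fh', Rh', s')"
    using Cons.prems by (simp add: rmax_step_eq[OF refl])
  from Cons.IH[OF this] show ?case
    unfolding unknown_pairs_update by blast
qed simp

lemma optimistic_model_fold_rmax_step:
  assumes "fold (rmax_step P f R) ts (fh, Rh, s) = (fh', Rh', s')"
    and "optimistic_model f R r (fh, Rh)"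
  shows "optimistic_model f R r (fh', Rh')"
  using assms
proof (induction ts arbitrary: fh Rh s)
  case (Cons t ts)
  let ?a = "P fh Rh t s"
  have "fold (rmax_step P f R) ts
      (fh(s := (fh s)(?a := f s ?a)), Rh(s := (Rh s)(?a := R s ?a)), f s ?a) = (fh', Rh', s')"
    using Cons.prems by (simp add: rmax_step_eq[OF refl])
  from Cons.IH[OF this optimistic_model_update[OF Cons.prems(2)]] show ?case .
qed simp

lemma fold_rmax_step_known_trajectory:
  assumes "known_trajectory f R (fh, Rh) s1 n (P fh Rh)"
  shows "fold (rmax_step P f R) [1..<Suc n] (fh, Rh, s1) = (fh, Rh, state_at f s1 (P fh Rh) (Suc n))"
  using assms
proof (induction n)
  case (Suc n)
  let ?s = "state_at f s1 (P fh Rh) (Suc n)"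
  have "fold (rmax_step P f R) [1..<Suc n] (fh, Rh, s1) = (fh, Rh, ?s)"
    using Suc by (intro Suc.IH) (auto simp: known_trajectory_def)
  moreover have "f ?s (P fh Rh (Suc n) ?s) = fh ?s (P fh Rh (Suc n) ?s) \<and>
      R ?s (P fh Rh (Suc n) ?s) = Rh ?s (P fh Rh (Suc n) ?s)"
    using Suc.prems by (auto simp: known_trajectory_def state_action_at_def Let_def)
  ultimately show ?case
    by (simp add: rmax_step_eq[OF refl] Let_def)
qed simp

lemma rmax_episode_eq:
  assumes "fold (rmax_step P f R) [1..<Suc T] (fh, Rh, s1) = (fh', Rh', s')"
  shows "rmax_episode P f R s1 T (fh, Rh) = (fh', Rh')"
  using assms by (simp add: rmax_episode_def)

lemma optimistic_model_rmax_episode: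
  "optimistic_model f R r m \<Longrightarrow> optimistic_model f R r (rmax_episode P f R s1 T m)"
  by (cases m, cases "fold (rmax_step P f R) [1..<Suc T] (fst m, snd m, s1)")
    (auto simp only: rmax_episode_eq fst_conv snd_conv dest: optimistic_model_fold_rmax_step)

lemma rmax_episode_known_trajectory:
  assumes "known_trajectory f R m s1 T (case_prod P m)"
  shows "rmax_episode P f R s1 T m = m"
proof (cases m)
  case (Pair fh Rh)
  with assms have "fold (rmax_step P f R) [1..<Suc T] (fh, Rh, s1) = (fh, Rh, state_at f s1 (P fh Rh) (Suc T))"
    by (intro fold_rmax_step_known_trajectory) simp
  with Pair show ?thesis
    by (simp add: rmax_episode_eq)
qed

lemma rmax_episode_learns:
  assumes "\<not> known_trajectory f R m s1 T (case_prod P m)"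
  shows "unknown_pairs f R (rmax_episode P f R s1 T m) \<subset> unknown_pairs f R m"
proof -
  obtain fh Rh where m: "m = (fh, Rh)" by (cases m)
  define p where "p = P fh Rh"
  obtain \<tau> where \<tau>: "1 \<le> \<tau>" "\<tau> \<le> Suc T"
    and before: "\<And>t. 1 \<le> t \<Longrightarrow> t < \<tau> \<Longrightarrow> state_action_at f s1 p t \<notin> unknown_pairs f R m"
    and at: "\<tau> \<le> T \<Longrightarrow> state_action_at f s1 p \<tau> \<in> unknown_pairs f R m"
    using first_hitting_step[of T "\<lambda>t. state_action_at f s1 p t \<in> unknown_pairs f R m"] by blast
  have "\<tau> \<le> T"
    using assms before \<tau> by (fastforce simp: known_trajectory_def m p_def)
  define s where "s = state_at f s1 p \<tau>"
  define a where "a = p \<tau> s"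
  have new: "(s, a) \<in> unknown_pairs f R m"
    using at[OF \<open>\<tau> \<le> T\<close>] by (simp add: state_action_at_def s_def a_def Let_def)
  \<comment> \<open>The model is unchanged before step \<open>\<tau>\<close>, so R-max really reaches \<open>(s, a)\<close> and learns it.\<close>
  obtain k where k: "\<tau> = Suc k"
    using \<tau> by (cases \<tau>) auto
  have prefix: "fold (rmax_step P f R) [1..<\<tau>] (fh, Rh, s1) = (fh, Rh, s)"
    unfolding k s_def p_def using before k
    by (intro fold_rmax_step_known_trajectory) (auto simp: known_trajectory_def m p_def)
  have "[1..<Suc T] = [1..<\<tau>] @ \<tau> # [Suc \<tau>..<Suc T]"
    using upt_add_eq_append[of 1 \<tau> "Suc T - \<tau>"] upt_conv_Cons[of \<tau> "Suc T"] \<tau> \<open>\<tau> \<le> T\<close>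
    by simp
  then have "fold (rmax_step P f R) [1..<Suc T] (fh, Rh, s1) =
      fold (rmax_step P f R) [Suc \<tau>..<Suc T] (rmax_step P f R \<tau> (fh, Rh, s))"
    by (simp only: fold_append fold_Cons o_apply prefix)
  also have "\<dots> = fold (rmax_step P f R) [Suc \<tau>..<Suc T]
      (fh(s := (fh s)(a := f s a)), Rh(s := (Rh s)(a := R s a)), f s a)"
    by (simp only: rmax_step_eq[of a P fh Rh \<tau> s, OF a_def[unfolded p_def]])
  finally have rest: "fold (rmax_step P f R) [1..<Suc T] (fh, Rh, s1) = \<dots>" .
  obtain fh' Rh' s' where run: "fold (rmax_step P f R) [1..<Suc T] (fh, Rh, s1) = (fh', Rh', s')"
    by (metis prod_cases3)
  then have "unknown_pairs f R (fh', Rh') \<subseteq>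
      unknown_pairs f R (fh(s := (fh s)(a := f s a)), Rh(s := (Rh s)(a := R s a)))"
    unfolding rest by (rule unknown_pairs_fold_rmax_step)
  then have "unknown_pairs f R (rmax_episode P f R s1 T m) \<subseteq> unknown_pairs f R m - {(s, a)}"
    unfolding m rmax_episode_eq[OF run] unknown_pairs_update .
  with new show ?thesis by blast
qed

lemma rmax_episode_stable_or_learns:
  fixes m :: "('s::finite, 'a::finite) model"
  assumes "planning_ok P s1 T" and "optimistic_model f R r m" and "\<And>s a. R s a \<le> r"
  shows "(rmax_episode P f R s1 T m = m \<and> optimal f R s1 T (case_prod P m)) \<or>
    card (unknown_pairs f R (rmax_episode P f R s1 T m)) < card (unknown_pairs f R m)"
proof (cases "known_trajectory f R m s1 T (case_prod P m)")
  case True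
  obtain fh Rh where m: "m = (fh, Rh)" by (cases m)
  have "optimal f R s1 T (P fh Rh)"
    using assms True m
    by (intro optimal_if_known_trajectory[of f R r fh Rh]) (simp_all add: planning_ok_def)
  with True m show ?thesis
    by (simp add: rmax_episode_known_trajectory)
next
  case False
  then show ?thesis
    by (intro disjI2 psubset_card_mono rmax_episode_learns) simp_all
qed

theorem mainTheorem9:
  fixes f :: "'s::finite \<Rightarrow> 'a::finite \<Rightarrow> 's"
    and R :: "'s \<Rightarrow> 'a \<Rightarrow> real"
    and s1 :: 's and T :: nat
    and P :: "('s, 'a) planner"
  assumes "planning_ok P s1 T"
  shows "optimal f R s1 T (rmax P f R s1 T)"
proof -
  let ?N = "card (UNIV :: 's set) * card (UNIV :: 'a set)"
  let ?init = "(\<lambda>s a. s, \<lambda>s a. Rmax_val R) :: ('s, 'a) model"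
  let ?m = "rmax_model P f R s1 T ?N"
  have "optimistic_model f R (Rmax_val R) ?init"
    by simp
  from funpow_stable_or_measure_decreases[OF this optimistic_model_rmax_episode
      rmax_episode_stable_or_learns[OF assms _ Rmax_val_ge[of R]]]
  have "optimal f R s1 T (case_prod P ?m) \<or> card (unknown_pairs f R ?m) + ?N \<le> card (unknown_pairs f R ?init)"
    unfolding rmax_model_def .
  then have "optimal f R s1 T (case_prod P ?m) \<or> card (unknown_pairs f R ?m) = 0"
    using card_unknown_pairs_le[of f R ?init] by linarith
  then have "optimal f R s1 T (case_prod P ?m) \<or> unknown_pairs f R ?m = {}"
    by (simp del: unknown_pairs.simps)
  then show ?thesis
    using assms by (auto simp: rmax_def unknown_pairs_empty_iff planning_ok_def split: prod.split)
qed

end
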